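(* Let $n>p\ge1$, $X\in\mathbb{R}^{n\times p}$ with rows $x_1^T,\dots,x_n^T$, $Y=(y_1,\dots,y_n)^T$, and $p\le h<n$. Assume (A1) $x_i\ne\pm x_j$ for $i\neq j$ and $x_i\neq0$ for all $i$; (A2) $r^2_{(h)}(\beta)>0$ for all $\beta\in\mathbb{R}^p$; (A3) for every $(\circ_1,\dots,\circ_{n-1})\in\{+,-\}^{n-1}$ the $(n-1)\times p$ matrix with rows $(x_1\circ_kx_{k+1})^T$, $k=1,\dots,n-1$, has rank $p$. If $U$ is a connected component of $\mathcal{U}$ with $\partial U\neq\emptyset$, then there exist $\beta\in\partial U$, pairwise distinct indices $i_1,\dots,i_{p+1}\in\{1,\dots,n\}$ and signs $\circ_1,\dots,\circ_p\in\{+,-\}$ such that the $p$ equations $(x_{i_k}\circ_kx_{i_{k+1}})^T\beta=y_{i_k}\circ_ky_{i_{k+1}}$, $k=1,\dots,p$, are linearly independent, $\beta$ is their unique solution, and $r^2_{i_1}(\beta)=r^2_{(h)}(\beta)=r^2_{(h+1)}(\beta)$.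
   Context: $r_i(\beta)=y_i-x_i^T\beta$; $r^2_{(1)}(\beta)\le\dots\le r^2_{(n)}(\beta)$ are the sorted squared residuals. For vectors/numbers $a,b$ and $\circ\in\{+,-\}$, $a\circ b$ is $a+b$ or $a-b$. $Q^{(n,h)}=\{w\in\{0,1\}^n:\sum_iw^i=h\}$; $(\beta,w)\in Z$ means $\sum_{i=1}^hr^2_{(i)}(\beta)=\sum_{i=1}^nw^ir_i^2(\beta)$; $\mathcal{U}$ is the set of $\beta\in\mathbb{R}^p$ for which exactly one $w\in Q^{(n,h)}$ satisfies $(\beta,w)\in Z$ (equivalently $r^2_{(h)}(\beta)<r^2_{(h+1)}(\beta)$). *)

theory Defs
  imports "HOL-Analysis.Analysis"
begin

text \<open>Data: n observations, rows x i (i < n, 0-based) in real^'p, responses y i.\<close>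

definition resid :: "(nat \<Rightarrow> real^'p) \<Rightarrow> (nat \<Rightarrow> real) \<Rightarrow> nat \<Rightarrow> real^'p \<Rightarrow> real" where
  "resid x y i \<beta> = y i - x i \<bullet> \<beta>"

text \<open>k-th smallest squared residual (1-based k, 1 <= k <= n).\<close>
definition sorted_sq :: "nat \<Rightarrow> (nat \<Rightarrow> real^'p) \<Rightarrow> (nat \<Rightarrow> real) \<Rightarrow> nat \<Rightarrow> real^'p \<Rightarrow> real" where
  "sorted_sq n x y k \<beta> = sort (map (\<lambda>i. (resid x y i \<beta>)\<^sup>2) [0..<n]) ! (k - 1)"

definition Qset :: "nat \<Rightarrow> nat \<Rightarrow> (nat \<Rightarrow> nat) set" where
  "Qset n h = {w \<in> {0..<n} \<rightarrow>\<^sub>E {0,1}. (\<Sum>i<n. w i) = h}"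

definition inZ :: "nat \<Rightarrow> nat \<Rightarrow> (nat \<Rightarrow> real^'p) \<Rightarrow> (nat \<Rightarrow> real) \<Rightarrow> real^'p \<Rightarrow> (nat \<Rightarrow> nat) \<Rightarrow> bool" where
  "inZ n h x y \<beta> w \<longleftrightarrow>
     (\<Sum>k=1..h. sorted_sq n x y k \<beta>) = (\<Sum>i<n. real (w i) * (resid x y i \<beta>)\<^sup>2)"

definition Uset :: "nat \<Rightarrow> nat \<Rightarrow> (nat \<Rightarrow> real^'p) \<Rightarrow> (nat \<Rightarrow> real) \<Rightarrow> (real^'p) set" where
  "Uset n h x y = {\<beta>. \<exists>!w. w \<in> Qset n h \<and> inZ n h x y \<beta> w}"

end

theory Submission
  imports Defs "HOL-Combinatorics.List_Permutation"
begin

text \<open>\<open>Uset\<close> is where the least trimmed squares (LTS) objective has a unique optimal weight vector,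
  i.e. where the \<open>h\<close> smallest squared residuals are strictly separated from the others.
  At a frontier point \<open>\<beta>\<close> of a component of \<open>Uset\<close> the \<open>h\<close>-th and \<open>(h+1)\<close>-th smallest
  squared residuals coincide, so a set \<open>T\<close> of observations is tied at a common level \<open>\<rho>\<^sup>2\<close>; let
  \<open>z\<^sub>a\<close> be the row \<open>x\<^sub>a\<close> multiplied by the sign of its residual. Moving \<open>\<beta>\<close> orthogonally to
  all differences \<open>z\<^sub>a - z\<^sub>b\<close> (\<open>a, b \<in> T\<close>) shifts the signed residuals of \<open>T\<close> equally, so the tie
  persists and the point stays on the frontier until another residual reaches the tied level; there
  the rank of the tied differences has grown. Since the rows span \<open>\<real>\<^sup>p\<close>, such a new tie is always
  met, so a frontier point of maximal rank has rank \<open>p\<close>. A chain of \<open>p + 1\<close> tied observations with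
  spanning consecutive differences \<open>z\<^sub>i - z\<^sub>j = \<plusminus>(x\<^sub>i \<circ> x\<^sub>j)\<close> then gives the \<open>p\<close> independent
  equations, solved uniquely by \<open>\<beta>\<close>.\<close>

section \<open>Order statistics and separating sets\<close>

definition order_stat :: "nat \<Rightarrow> (nat \<Rightarrow> 'a::linorder) \<Rightarrow> nat \<Rightarrow> 'a" where
  "order_stat n g k = sort (map g [0..<n]) ! (k - 1)"

lemma sorted_sq_eq_order_stat:
  "sorted_sq n x y k \<beta> = order_stat n (\<lambda>i. (resid x y i \<beta>)\<^sup>2) k"
  by (simp add: sorted_sq_def order_stat_def)

lemma sorting_permutation:
  fixes g :: "nat \<Rightarrow> 'a::linorder"
  obtains \<pi> where "bij_betw \<pi> {..<n} {..<n}"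
    and "\<And>k. k < n \<Longrightarrow> sort (map g [0..<n]) ! k = g (\<pi> k)"
    and "\<And>i j. i \<le> j \<Longrightarrow> j < n \<Longrightarrow> g (\<pi> i) \<le> g (\<pi> j)"
proof -
  have "mset (sort (map g [0..<n])) = mset (map g [0..<n])" by simp
  from permutation_Ex_bij[OF this] obtain \<pi> where
    \<pi>: "bij_betw \<pi> {..<n} {..<n}" "\<forall>k<n. sort (map g [0..<n]) ! k = map g [0..<n] ! \<pi> k"
    by auto
  have sort_eq: "sort (map g [0..<n]) ! k = g (\<pi> k)" if "k < n" for k
    using \<pi> that by (auto dest: bij_betwE)
  show ?thesis
  proof (rule that[OF \<pi>(1) sort_eq])
    fix i j assume "i \<le> j" "j < n"
    then show "g (\<pi> i) \<le> g (\<pi> j)"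
      using sorted_nth_mono[of "sort (map g [0..<n])" i j] sort_eq by simp
  qed
qed

lemma card_filter_bij_betw:
  assumes "bij_betw \<pi> {..<n} {..<n}"
  shows "card {i. i < n \<and> P i} = card {k. k < n \<and> P (\<pi> k)}"
proof -
  have "{i. i < n \<and> P i} = \<pi> ` {k. k < n \<and> P (\<pi> k)}"
    using assms by (auto simp: bij_betw_def)
  moreover have "inj_on \<pi> {k. k < n \<and> P (\<pi> k)}"
    using assms by (auto simp: bij_betw_def intro: inj_on_subset)
  ultimately show ?thesis by (simp add: card_image)
qed

text \<open>In a sorted family, the positions satisfying a downward closed property form an initial
  segment.\<close>

lemma card_sorted_downclosed_gt:
  assumes mono: "\<And>i j. i \<le> j \<Longrightarrow> j < n \<Longrightarrow> a i \<le> (a j :: 'a::linorder)"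
    and down: "\<And>u v. u \<le> v \<Longrightarrow> P v \<Longrightarrow> P u" and "k < n" "P (a k)"
  shows "k < card {j. j < n \<and> P (a j)}"
proof -
  have "{..k} \<subseteq> {j. j < n \<and> P (a j)}"
    using mono[of _ k] down assms(3,4) by force
  then show ?thesis using card_mono[of "{j. j < n \<and> P (a j)}" "{..k}"] by simp
qed

lemma card_sorted_downclosed_le:
  assumes mono: "\<And>i j. i \<le> j \<Longrightarrow> j < n \<Longrightarrow> a i \<le> (a j :: 'a::linorder)"
    and down: "\<And>u v. u \<le> v \<Longrightarrow> P v \<Longrightarrow> P u" and "\<not> P (a k)"
  shows "card {j. j < n \<and> P (a j)} \<le> k"
proof -
  have "{j. j < n \<and> P (a j)} \<subseteq> {..<k}"
    using mono[of k] down assms(3) by (force simp: not_less[symmetric])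
  then show ?thesis using card_mono[of "{..<k}"] by fastforce
qed

lemma order_stat_eqI:
  fixes g :: "nat \<Rightarrow> 'a::linorder"
  assumes "1 \<le> k" "k \<le> n"
    and "card {i. i < n \<and> g i < c} < k" "k \<le> card {i. i < n \<and> g i \<le> c}"
  shows "order_stat n g k = c"
proof -
  obtain \<pi> where \<pi>: "bij_betw \<pi> {..<n} {..<n}"
    and sort_eq: "\<And>k. k < n \<Longrightarrow> sort (map g [0..<n]) ! k = g (\<pi> k)"
    and mono: "\<And>i j. i \<le> j \<Longrightarrow> j < n \<Longrightarrow> g (\<pi> i) \<le> g (\<pi> j)"
    using sorting_permutation[of n g] by blast
  have "k - 1 < n" using assms(1,2) by simp
  have "\<not> g (\<pi> (k - 1)) < c"
    using card_sorted_downclosed_gt[of n "g \<circ> \<pi>" "\<lambda>v. v < c", OF _ _ \<open>k - 1 < n\<close>]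
      mono assms(1,3) card_filter_bij_betw[OF \<pi>, of "\<lambda>i. g i < c"]
    by fastforce
  moreover have "\<not> g (\<pi> (k - 1)) > c"
    using card_sorted_downclosed_le[of n "g \<circ> \<pi>" "\<lambda>v. v \<le> c" "k - 1"]
      mono assms(1,4) card_filter_bij_betw[OF \<pi>, of "\<lambda>i. g i \<le> c"]
    by fastforce
  ultimately show ?thesis
    using sort_eq[OF \<open>k - 1 < n\<close>] by (simp add: order_stat_def)
qed

definition lower_set :: "nat \<Rightarrow> nat \<Rightarrow> (nat \<Rightarrow> 'a::linorder) \<Rightarrow> nat set \<Rightarrow> bool" where
  "lower_set n h g H \<longleftrightarrow>
     H \<subseteq> {..<n} \<and> card H = h \<and> (\<forall>i\<in>H. \<forall>j<n. j \<notin> H \<longrightarrow> g i \<le> g j)"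

definition separates :: "nat \<Rightarrow> nat \<Rightarrow> (nat \<Rightarrow> 'a::linorder) \<Rightarrow> nat set \<Rightarrow> bool" where
  "separates n h g H \<longleftrightarrow>
     H \<subseteq> {..<n} \<and> card H = h \<and> (\<forall>i\<in>H. \<forall>j<n. j \<notin> H \<longrightarrow> g i < g j)"

definition tied :: "nat \<Rightarrow> nat \<Rightarrow> (nat \<Rightarrow> 'a::linorder) \<Rightarrow> 'a \<Rightarrow> bool" where
  "tied n h g c \<longleftrightarrow> card {i. i < n \<and> g i < c} < h \<and> h < card {i. i < n \<and> g i \<le> c}"

lemma separates_imp_lower_set: "separates n h g H \<Longrightarrow> lower_set n h g H"
  by (auto simp: separates_def lower_set_def less_imp_le)

lemma exists_lower_set:
  fixes g :: "nat \<Rightarrow> 'a::{linorder,comm_monoid_add}"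
  assumes "h \<le> n"
  obtains H where "lower_set n h g H" and "sum g H = (\<Sum>k=1..h. order_stat n g k)"
proof -
  obtain \<pi> where \<pi>: "bij_betw \<pi> {..<n} {..<n}"
    and sort_eq: "\<And>k. k < n \<Longrightarrow> sort (map g [0..<n]) ! k = g (\<pi> k)"
    and mono: "\<And>i j. i \<le> j \<Longrightarrow> j < n \<Longrightarrow> g (\<pi> i) \<le> g (\<pi> j)"
    using sorting_permutation[of n g] by blast
  have inj: "inj_on \<pi> {..<h}"
    using \<pi> assms by (auto simp: bij_betw_def intro: inj_on_subset)
  have "lower_set n h g (\<pi> ` {..<h})"
    unfolding lower_set_def
  proof (intro conjI ballI allI impI)
    show "\<pi> ` {..<h} \<subseteq> {..<n}" using \<pi> assms by (auto dest: bij_betwE)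
    show "card (\<pi> ` {..<h}) = h" using card_image[OF inj] by simp
    fix i j assume i: "i \<in> \<pi> ` {..<h}" and j: "j < n" "j \<notin> \<pi> ` {..<h}"
    obtain k where k: "k < h" "i = \<pi> k" using i by blast
    obtain l where l: "l < n" "j = \<pi> l"
      using j(1) \<pi> by (metis bij_betw_imp_surj_on imageE lessThan_iff)
    have "h \<le> l" using j(2) l(2) by (auto simp: not_le)
    then show "g i \<le> g j" using mono[of k l] k l by simp
  qed
  moreover have "(\<Sum>k=1..h. order_stat n g k) = sum g (\<pi> ` {..<h})"
  proof -
    have "(\<Sum>k=1..h. order_stat n g k) = (\<Sum>k<h. order_stat n g (Suc k))"
      by (simp add: sum.atLeast1_atMost_eq)
    also have "\<dots> = (\<Sum>k<h. g (\<pi> k))"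
      using sort_eq assms by (intro sum.cong) (auto simp: order_stat_def)
    finally show ?thesis using sum.reindex[OF inj, of g] by simp
  qed
  ultimately show ?thesis using that by simp
qed

text \<open>Exchange argument: pair off \<open>H - K\<close> with \<open>K - H\<close> by a bijection.\<close>

lemma sum_le_exchange:
  fixes g :: "'b \<Rightarrow> 'a::{ordered_cancel_comm_monoid_add,linorder}"
  assumes "finite H" "finite K" "card H = card K"
    and le: "\<And>i j. i \<in> H - K \<Longrightarrow> j \<in> K - H \<Longrightarrow> g i \<le> g j"
  shows "sum g H \<le> sum g K"
    and "(\<And>i j. i \<in> H - K \<Longrightarrow> j \<in> K - H \<Longrightarrow> g i < g j) \<Longrightarrow> H \<noteq> K \<Longrightarrow> sum g H < sum g K"
proof -
  have "card (H - K) = card (K - H)"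
    using assms(1-3) card_Diff_subset_Int[of H K] card_Diff_subset_Int[of K H]
    by (simp add: Int_commute[of K H])
  then obtain \<phi> where \<phi>: "bij_betw \<phi> (H - K) (K - H)"
    using assms(1,2) finite_same_card_bij by (metis finite_Diff)
  have sum_KH: "sum g (K - H) = (\<Sum>i\<in>H - K. g (\<phi> i))"
    by (rule sum.reindex_bij_betw[OF \<phi>, symmetric])
  have \<phi>_in: "\<phi> i \<in> K - H" if "i \<in> H - K" for i
    using \<phi> that by (auto dest: bij_betwE)
  have split: "sum g H = sum g (H \<inter> K) + sum g (H - K)" "sum g K = sum g (H \<inter> K) + sum g (K - H)"
    using sum.Int_Diff[OF assms(1), of g K] sum.Int_Diff[OF assms(2), of g H]
    by (simp_all add: Int_commute[of K H])
  have "sum g (H - K) \<le> sum g (K - H)"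
    unfolding sum_KH using \<phi>_in le by (intro sum_mono) auto
  then show "sum g H \<le> sum g K" unfolding split by (rule add_left_mono)
  assume lt: "\<And>i j. i \<in> H - K \<Longrightarrow> j \<in> K - H \<Longrightarrow> g i < g j" and "H \<noteq> K"
  have "H - K \<noteq> {}"
  proof
    assume "H - K = {}"
    then have "H \<subseteq> K" by simp
    then have "H = K" using card_subset_eq[OF assms(2)] assms(3) by simp
    then show False using \<open>H \<noteq> K\<close> by simp
  qed
  then have "sum g (H - K) < sum g (K - H)"
    unfolding sum_KH using \<phi>_in lt assms(1) by (intro sum_strict_mono) auto
  then show "sum g H < sum g K" unfolding split by (rule add_strict_left_mono)
qed

lemma lower_set_sum_le:
  fixes g :: "nat \<Rightarrow> 'a::{ordered_cancel_comm_monoid_add,linorder}"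
  assumes H: "lower_set n h g H" and K: "K \<subseteq> {..<n}" "card K = h"
  shows "sum g H \<le> sum g K"
proof (rule sum_le_exchange(1))
  show "finite H" "finite K" "card H = card K"
    using H K by (auto simp: lower_set_def intro: finite_subset)
  show "g i \<le> g j" if "i \<in> H - K" "j \<in> K - H" for i j
    using H K that by (auto simp: lower_set_def)
qed

lemma separates_sum_less:
  fixes g :: "nat \<Rightarrow> 'a::{ordered_cancel_comm_monoid_add,linorder}"
  assumes H: "separates n h g H" and K: "K \<subseteq> {..<n}" "card K = h" "K \<noteq> H"
  shows "sum g H < sum g K"
proof (rule sum_le_exchange(2))
  show "finite H" "finite K" "card H = card K"
    using H K by (auto simp: separates_def intro: finite_subset)
  show "g i < g j" if "i \<in> H - K" "j \<in> K - H" for i j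
    using H K that by (auto simp: separates_def)
  then show "g i \<le> g j" if "i \<in> H - K" "j \<in> K - H" for i j
    using that by (simp add: less_imp_le)
  show "H \<noteq> K" using K(3) by simp
qed

lemma lower_set_not_separates:
  assumes "lower_set n h g H" "\<not> separates n h g H"
  obtains i j where "i \<in> H" "j < n" "j \<notin> H" "g i = g j"
proof -
  obtain i j where "i \<in> H" "j < n" "j \<notin> H" "\<not> g i < g j"
    using assms(2) assms(1) by (auto simp: lower_set_def separates_def)
  moreover have "g i \<le> g j" using assms(1) calculation(1-3) by (simp add: lower_set_def)
  ultimately show ?thesis using that by simp
qed

lemma lower_set_swap:
  fixes g :: "nat \<Rightarrow> 'a::{ab_group_add,linorder}"
  assumes H: "lower_set n h g H" and "\<not> separates n h g H"
  obtains H' where "H' \<subseteq> {..<n}" "card H' = h" "sum g H' = sum g H" "H' \<noteq> H"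
proof -
  obtain i j where ij: "i \<in> H" "j < n" "j \<notin> H" "g i = g j"
    using lower_set_not_separates[OF assms] .
  have H_sub: "H \<subseteq> {..<n}" "card H = h" "finite H"
    using H by (auto simp: lower_set_def intro: finite_subset)
  then have "card H > 0" using ij(1) by (auto simp: card_gt_0_iff)
  then show ?thesis
    using H_sub ij
    by (intro that[of "insert j (H - {i})"]) (auto simp: card_insert_disjoint sum_diff1)
qed

lemma lower_set_tied:
  assumes "lower_set n h g H" "i \<in> H" "j < n" "j \<notin> H" "g i = g j"
  shows "tied n h g (g i)"
proof -
  have H: "H \<subseteq> {..<n}" "card H = h" "finite H"
    using assms(1) by (auto simp: lower_set_def intro: finite_subset)
  have "{k. k < n \<and> g k < g i} \<subseteq> H - {i}"
    using assms(1,2) by (auto simp: lower_set_def not_le[symmetric])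
  then have "card {k. k < n \<and> g k < g i} \<le> card (H - {i})"
    using H(3) by (intro card_mono) auto
  moreover have "insert j H \<subseteq> {k. k < n \<and> g k \<le> g i}"
    using assms by (auto simp: lower_set_def)
  then have "card (insert j H) \<le> card {k. k < n \<and> g k \<le> g i}"
    by (intro card_mono) auto
  moreover have "h > 0" using H assms(2) by (auto simp: card_gt_0_iff)
  ultimately show ?thesis
    using H assms(2,4) by (simp add: tied_def card_Diff_singleton)
qed

lemma separates_not_tied: "separates n h g H \<Longrightarrow> \<not> tied n h g c"
proof
  assume sep: "separates n h g H" and tie: "tied n h g c"
  have H: "H \<subseteq> {..<n}" "card H = h" "finite H"
    using sep by (auto simp: separates_def intro: finite_subset)
  have "\<not> H \<subseteq> {i. i < n \<and> g i < c}"
    using tie H card_mono[of "{i. i < n \<and> g i < c}" H] by (auto simp: tied_def)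
  moreover have "\<not> {i. i < n \<and> g i \<le> c} \<subseteq> H"
    using tie H card_mono[of H "{i. i < n \<and> g i \<le> c}"] by (auto simp: tied_def)
  ultimately show False
    using sep H(1) by (force simp: separates_def)
qed

lemma order_stat_tied:
  assumes "tied n h g c" "1 \<le> h" "h < n"
  shows "order_stat n g h = c" "order_stat n g (Suc h) = c"
  using assms by (auto simp: tied_def intro: order_stat_eqI)

lemma not_separates_tied:
  fixes g :: "nat \<Rightarrow> 'a::{linorder,comm_monoid_add}"
  assumes "\<nexists>H. separates n h g H" "1 \<le> h" "h < n"
  shows "tied n h g (order_stat n g h)"
proof -
  obtain H where "lower_set n h g H"
    using exists_lower_set[of h n g] assms(3) by auto
  moreover obtain i j where "i \<in> H" "j < n" "j \<notin> H" "g i = g j"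
    using lower_set_not_separates[OF \<open>lower_set n h g H\<close>] assms(1) by blast
  ultimately have "tied n h g (g i)" by (rule lower_set_tied)
  then show ?thesis using order_stat_tied(1)[OF _ assms(2,3)] by metis
qed

section \<open>Uniqueness of the optimal weight vector\<close>

lemma sum_zero_one_weights:
  fixes g :: "nat \<Rightarrow> 'a::comm_semiring_1"
  assumes "\<And>i. i < n \<Longrightarrow> w i \<in> {0, 1}"
  shows "(\<Sum>i<n. of_nat (w i) * g i) = sum g {i. i < n \<and> w i = 1}"
proof -
  have "of_nat (w i) * g i = (if w i = 1 then g i else 0)" if "i < n" for i
    using assms[OF that] by auto
  then have "(\<Sum>i<n. of_nat (w i) * g i) = (\<Sum>i<n. if w i = 1 then g i else 0)"
    by (intro sum.cong) auto
  also have "\<dots> = sum g {i \<in> {..<n}. w i = 1}"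
    by (rule sum.inter_filter[symmetric]) simp
  also have "{i \<in> {..<n}. w i = 1} = {i. i < n \<and> w i = 1}"
    by auto
  finally show ?thesis .
qed

lemma Qset_bij_betw_subsets:
  "bij_betw (\<lambda>w. {i. i < n \<and> w i = 1}) (Qset n h) {H. H \<subseteq> {..<n} \<and> card H = h}"
proof (rule bij_betw_byWitness[where f' = "\<lambda>H. restrict (\<lambda>i. if i \<in> H then 1 else 0 :: nat) {0..<n}"])
  have card_eq: "card {i. i < n \<and> w i = 1} = (\<Sum>i<n. w i)" if "\<And>i. i < n \<Longrightarrow> w i \<in> {0, 1}"
    for w :: "nat \<Rightarrow> nat"
    using sum_zero_one_weights[of n w "\<lambda>_. 1 :: nat", OF that] by simp
  show "\<forall>w\<in>Qset n h. restrict (\<lambda>i. if i \<in> {i. i < n \<and> w i = 1} then 1 else 0 :: nat) {0..<n} = w"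
    by (auto simp: Qset_def PiE_iff restrict_def extensional_def fun_eq_iff)
  show "\<forall>H\<in>{H. H \<subseteq> {..<n} \<and> card H = h}.
      {i. i < n \<and> restrict (\<lambda>i. if i \<in> H then 1 else 0 :: nat) {0..<n} i = 1} = H"
    by auto
  show "(\<lambda>w. {i. i < n \<and> w i = 1}) ` Qset n h \<subseteq> {H. H \<subseteq> {..<n} \<and> card H = h}"
    using card_eq by (auto simp: Qset_def PiE_iff)
  show "(\<lambda>H. restrict (\<lambda>i. if i \<in> H then 1 else 0 :: nat) {0..<n}) ` {H. H \<subseteq> {..<n} \<and> card H = h}
      \<subseteq> Qset n h"
  proof safe
    fix H assume H: "H \<subseteq> {..<n}"
    let ?w = "restrict (\<lambda>i. if i \<in> H then 1 else 0 :: nat) {0..<n}"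
    have "{i. i < n \<and> ?w i = 1} = H" using H by auto
    then show "?w \<in> Qset n (card H)"
      using card_eq[of ?w] by (auto simp: Qset_def PiE_iff)
  qed
qed

lemma bij_betw_ex1_iff:
  assumes "bij_betw f A B"
  shows "(\<exists>!a. a \<in> A \<and> P (f a)) \<longleftrightarrow> (\<exists>!b. b \<in> B \<and> P b)"
  using assms by (auto simp: bij_betw_def inj_on_def Ex1_def)

lemma unique_minimizer_iff_separates:
  fixes g :: "nat \<Rightarrow> 'a::linordered_ab_group_add"
  assumes "h \<le> n"
  shows "(\<exists>!H. (H \<subseteq> {..<n} \<and> card H = h) \<and> sum g H = (\<Sum>k=1..h. order_stat n g k))
    \<longleftrightarrow> (\<exists>H. separates n h g H)"
proof -
  obtain H0 where H0: "lower_set n h g H0" and S: "sum g H0 = (\<Sum>k=1..h. order_stat n g k)"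
    using exists_lower_set[OF assms] by blast
  have H0_sub: "H0 \<subseteq> {..<n}" "card H0 = h" "finite H0"
    using H0 by (auto simp: lower_set_def intro: finite_subset)
  show ?thesis
  proof
    assume unique: "\<exists>!H. (H \<subseteq> {..<n} \<and> card H = h) \<and> sum g H = (\<Sum>k=1..h. order_stat n g k)"
    show "\<exists>H. separates n h g H"
    proof (rule ccontr)
      assume "\<nexists>H. separates n h g H"
      then obtain H1 where "H1 \<subseteq> {..<n}" "card H1 = h" "sum g H1 = sum g H0" "H1 \<noteq> H0"
        using lower_set_swap[OF H0] by blast
      moreover obtain H' where "(H' \<subseteq> {..<n} \<and> card H' = h) \<and> sum g H' = (\<Sum>k=1..h. order_stat n g k)"
        and only: "\<forall>K. (K \<subseteq> {..<n} \<and> card K = h) \<and> sum g K = (\<Sum>k=1..h. order_stat n g k) \<longrightarrow> K = H'"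
        using unique by (rule ex1E)
      ultimately show False using H0_sub S only[rule_format, of H0] only[rule_format, of H1] by simp
    qed
  next
    assume "\<exists>H. separates n h g H"
    then obtain H where H: "separates n h g H" by blast
    have H_sub: "H \<subseteq> {..<n}" "card H = h" using H by (auto simp: separates_def)
    have "sum g H = sum g H0"
      using lower_set_sum_le[OF separates_imp_lower_set[OF H] H0_sub(1,2)]
        lower_set_sum_le[OF H0 H_sub] by simp
    then show "\<exists>!H. (H \<subseteq> {..<n} \<and> card H = h) \<and> sum g H = (\<Sum>k=1..h. order_stat n g k)"
    proof (intro ex1I[of _ H] conjI H_sub)
      show "sum g H = (\<Sum>k=1..h. order_stat n g k)" using \<open>sum g H = sum g H0\<close> S by simp
      fix K assume K: "(K \<subseteq> {..<n} \<and> card K = h) \<and> sum g K = (\<Sum>k=1..h. order_stat n g k)"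
      show "K = H"
      proof (rule ccontr)
        assume "K \<noteq> H"
        then have "sum g H < sum g K" using separates_sum_less[OF H] K by blast
        then show False using K S \<open>sum g H = sum g H0\<close> by simp
      qed
    qed
  qed
qed

lemma Uset_iff_separates:
  assumes "h \<le> n"
  shows "\<beta> \<in> Uset n h x y \<longleftrightarrow> (\<exists>H. separates n h (\<lambda>i. (resid x y i \<beta>)\<^sup>2) H)"
proof -
  let ?g = "\<lambda>i. (resid x y i \<beta>)\<^sup>2" and ?S = "\<Sum>k=1..h. order_stat n (\<lambda>i. (resid x y i \<beta>)\<^sup>2) k"
  have inZ_iff: "inZ n h x y \<beta> w \<longleftrightarrow> sum ?g {i. i < n \<and> w i = 1} = ?S" if "w \<in> Qset n h" for w
  proof -
    have "w i \<in> {0, 1}" if "i < n" for i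
      using \<open>w \<in> Qset n h\<close> that by (auto simp: Qset_def PiE_iff)
    then show ?thesis
      unfolding inZ_def sorted_sq_eq_order_stat using sum_zero_one_weights[of n w ?g] by auto
  qed
  have "\<beta> \<in> Uset n h x y \<longleftrightarrow> (\<exists>!w. w \<in> Qset n h \<and> inZ n h x y \<beta> w)"
    by (simp add: Uset_def)
  also have "\<dots> \<longleftrightarrow> (\<exists>!w. w \<in> Qset n h \<and> sum ?g {i. i < n \<and> w i = 1} = ?S)"
    using inZ_iff by (intro arg_cong[where f = Ex1] ext) blast
  also have "\<dots> \<longleftrightarrow> (\<exists>!H. H \<in> {H. H \<subseteq> {..<n} \<and> card H = h} \<and> sum ?g H = ?S)"
    by (rule bij_betw_ex1_iff[OF Qset_bij_betw_subsets])
  also have "\<dots> \<longleftrightarrow> (\<exists>H. separates n h ?g H)"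
    using unique_minimizer_iff_separates[OF assms, of ?g] by simp
  finally show ?thesis .
qed

section \<open>Openness of \<open>Uset\<close>\<close>

lemma continuous_on_sq_resid [continuous_intros]:
  "continuous_on S (\<lambda>\<beta>. (resid x y i \<beta>)\<^sup>2)"
  unfolding resid_def by (intro continuous_intros)

lemma open_resid_order:
  assumes "finite I" "finite J"
  shows "open {\<beta>. \<forall>i\<in>I. \<forall>j\<in>J. (resid x y i \<beta>)\<^sup>2 < (resid x y j \<beta>)\<^sup>2}"
proof -
  have "{\<beta>. \<forall>i\<in>I. \<forall>j\<in>J. (resid x y i \<beta>)\<^sup>2 < (resid x y j \<beta>)\<^sup>2}
      = (\<Inter>i\<in>I. \<Inter>j\<in>J. {\<beta>. (resid x y i \<beta>)\<^sup>2 < (resid x y j \<beta>)\<^sup>2})" by auto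
  also have "open \<dots>"
    using assms by (intro open_INT ballI open_Collect_less continuous_on_sq_resid)
  finally show ?thesis .
qed

lemma open_Uset:
  assumes "h \<le> n"
  shows "open (Uset n h x y)"
proof -
  have "Uset n h x y = (\<Union>H\<in>{H. H \<subseteq> {..<n} \<and> card H = h}.
      {\<beta>. \<forall>i\<in>H. \<forall>j\<in>{..<n} - H. (resid x y i \<beta>)\<^sup>2 < (resid x y j \<beta>)\<^sup>2})"
    unfolding set_eq_iff Uset_iff_separates[OF assms] separates_def by blast
  also have "open \<dots>"
    by (intro open_UN ballI open_resid_order) (auto intro: finite_subset)
  finally show ?thesis .
qed

lemma continuous_sign_persists:
  fixes f :: "real \<Rightarrow> real"
  assumes "continuous_on {a..b} f" "f a < 0" "\<forall>t\<in>{a..<b}. f t \<noteq> 0" "s \<in> {a..b}"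
  shows "f s \<le> 0"
proof (rule ccontr)
  assume "\<not> f s \<le> 0"
  moreover have "continuous_on {a..s} f"
    by (rule continuous_on_subset[OF assms(1)]) (use assms(4) in auto)
  ultimately obtain t where "a \<le> t" "t \<le> s" "f t = 0"
    using IVT'[of f a 0 s] assms(2,4) by auto
  then show False using assms(3,4) \<open>\<not> f s \<le> 0\<close> by (cases "t = b") auto
qed

section \<open>Spanning families\<close>

lemma independent_if_span_UNIV:
  fixes w :: "nat \<Rightarrow> 'a::euclidean_space"
  assumes span: "span (w ` {..<DIM('a)}) = UNIV"
    and sum0: "(\<Sum>k<DIM('a). c k *\<^sub>R w k) = 0" and "k < DIM('a)"
  shows "c k = 0"
proof -
  let ?p = "DIM('a)" and ?W = "w ` {..<DIM('a)}"
  have "dim ?W = ?p" using span dim_eq_full by blast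
  moreover have "dim ?W \<le> card ?W" "card ?W \<le> ?p"
    using dim_le_card'[of ?W] card_image_le[of "{..<?p}" w] by simp_all
  ultimately have card_W: "card ?W = ?p" by simp
  then have inj: "inj_on w {..<?p}" by (simp add: eq_card_imp_inj_on)
  have "independent ?W" using card_eq_dim[of ?W ?W] card_W \<open>dim ?W = ?p\<close> span_superset by simp
  moreover have "(\<Sum>v\<in>?W. c (the_inv_into {..<?p} w v) *\<^sub>R v) = 0"
    using sum0 by (simp add: sum.reindex[OF inj] the_inv_into_f_f[OF inj])
  ultimately have "c (the_inv_into {..<?p} w v) = 0" if "v \<in> ?W" for v
    using that dependent_finite[of ?W] by auto
  then show ?thesis using \<open>k < ?p\<close> the_inv_into_f_f[OF inj] by force
qed

lemma inner_eq_iff_if_span_UNIV: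
  fixes w :: "nat \<Rightarrow> 'a::euclidean_space"
  assumes "span (w ` {..<p}) = UNIV"
  shows "(\<forall>k<p. w k \<bullet> \<gamma> = w k \<bullet> \<beta>) \<longleftrightarrow> \<gamma> = \<beta>"
proof
  assume "\<forall>k<p. w k \<bullet> \<gamma> = w k \<bullet> \<beta>"
  then have "orthogonal (\<gamma> - \<beta>) v" if "v \<in> w ` {..<p}" for v
    using that by (auto simp: orthogonal_def inner_diff_left inner_diff_right inner_commute)
  then have "orthogonal (\<gamma> - \<beta>) (\<gamma> - \<beta>)"
    using orthogonal_to_span assms by blast
  then show "\<gamma> = \<beta>" by (simp add: orthogonal_def)
qed simp

text \<open>If the differences of \<open>f\<close> on \<open>A\<close> span the space, some \<open>DIM('a) + 1\<close> points of \<open>A\<close> have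
  spanning consecutive differences: take a basis \<open>f a\<^sub>k - f a\<^sub>0\<close> of differences from a fixed point
  and use the chain \<open>a\<^sub>0, a\<^sub>1, \<dots>\<close>; each \<open>f a\<^sub>k - f a\<^sub>0\<close> telescopes.\<close>

lemma chain_with_spanning_differences:
  fixes f :: "'b \<Rightarrow> 'a::euclidean_space"
  assumes span: "span {f a - f b | a b. a \<in> A \<and> b \<in> A} = UNIV" and "a0 \<in> A"
  obtains idx where "\<And>k. k \<le> DIM('a) \<Longrightarrow> idx k \<in> A"
    and "span ((\<lambda>k. f (idx k) - f (idx (Suc k))) ` {..<DIM('a)}) = UNIV"
proof -
  let ?p = "DIM('a)"
  define E where "E = {f a - f a0 | a. a \<in> A}"
  have "{f a - f b | a b. a \<in> A \<and> b \<in> A} \<subseteq> span E"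
  proof safe
    fix a b assume "a \<in> A" "b \<in> A"
    then have "(f a - f a0) - (f b - f a0) \<in> span E"
      unfolding E_def by (intro span_diff span_base) auto
    then show "f a - f b \<in> span E" by simp
  qed
  then have "span E = UNIV" using span span_minimal[OF _ subspace_span] by blast
  obtain B where B: "B \<subseteq> E" "independent B" "E \<subseteq> span B" "card B = dim E"
    by (rule basis_exists)
  have "card B = ?p" using B(4) \<open>span E = UNIV\<close> dim_eq_full by metis
  moreover have "finite B" using B(2) by (rule finiteI_independent)
  ultimately obtain en where en: "bij_betw en {..<?p} B"
    using ex_bij_betw_nat_finite[of B] by (metis atLeast0LessThan)
  have "\<forall>k\<in>{..<?p}. \<exists>a. a \<in> A \<and> en k = f a - f a0"
  proof
    fix k assume "k \<in> {..<?p}"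
    then have "en k \<in> E" using en B(1) bij_betwE by blast
    then show "\<exists>a. a \<in> A \<and> en k = f a - f a0" unfolding E_def by blast
  qed
  then obtain aa where aa: "\<And>k. k < ?p \<Longrightarrow> aa k \<in> A \<and> en k = f (aa k) - f a0"
    by (metis bchoice lessThan_iff)
  define idx where "idx k = (case k of 0 \<Rightarrow> a0 | Suc k \<Rightarrow> aa k)" for k
  let ?W = "(\<lambda>k. f (idx k) - f (idx (Suc k))) ` {..<?p}"
  have "B \<subseteq> span ?W"
  proof
    fix b assume "b \<in> B"
    then obtain k where k: "k < ?p" "b = en k" using en by (auto simp: bij_betw_def)
    have "f (idx 0) - f (idx (Suc k)) = (\<Sum>m<Suc k. f (idx m) - f (idx (Suc m)))"
      by (rule sum_lessThan_telescope'[symmetric])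
    also have "\<dots> \<in> span ?W" using k by (intro span_sum span_base) auto
    finally show "b \<in> span ?W"
      using k aa[of k] span_neg by (fastforce simp: idx_def)
  qed
  then have "span ?W = UNIV"
    using B(3) \<open>span E = UNIV\<close> span_minimal[OF _ subspace_span, of B ?W] span_mono[OF B(3)]
    by (metis span_span subset_antisym top_greatest)
  moreover have "idx k \<in> A" if "k \<le> ?p" for k
    using that aa \<open>a0 \<in> A\<close> by (cases k) (auto simp: idx_def)
  ultimately show ?thesis using that by blast
qed

lemma inj_on_if_consecutive_differences_independent:
  fixes f :: "'b \<Rightarrow> 'a::real_vector"
  assumes indep: "\<And>c k. (\<Sum>k<p. c k *\<^sub>R (f (idx k) - f (idx (Suc k)))) = 0 \<Longrightarrow> k < p \<Longrightarrow> c k = 0"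
  shows "inj_on idx {0..p}"
proof (rule inj_onI, rule ccontr)
  fix i j assume ij: "i \<in> {0..p}" "j \<in> {0..p}" "idx i = idx j" "i \<noteq> j"
  define m l where "m = min i j" and "l = max i j"
  have "m < l" "l \<le> p" "idx m = idx l" using ij by (auto simp: m_def l_def min_def max_def)
  \<comment> \<open>the consecutive differences between positions \<open>m\<close> and \<open>l\<close> telescope to \<open>0\<close>\<close>
  have "(\<Sum>k<p. (if m \<le> k \<and> k < l then 1 else 0) *\<^sub>R (f (idx k) - f (idx (Suc k))))
      = (\<Sum>k\<in>{m..<l}. f (idx k) - f (idx (Suc k)))"
    using \<open>l \<le> p\<close> by (intro sum.mono_neutral_cong_right) auto
  also have "\<dots> = - (\<Sum>k\<in>{m..<l}. f (idx (Suc k)) - f (idx k))"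
    by (simp add: sum_negf[symmetric])
  also have "\<dots> = 0"
    using sum_Suc_diff'[of m l "f \<circ> idx"] \<open>m < l\<close> \<open>idx m = idx l\<close> by simp
  finally show False using indep[of _ m] \<open>m < l\<close> \<open>l \<le> p\<close> by fastforce
qed

section \<open>Frontier points of a component\<close>

locale lts_component =
  fixes n h :: nat and x :: "nat \<Rightarrow> real^'p" and y :: "nat \<Rightarrow> real" and U :: "(real^'p) set"
  assumes h_pos: "1 \<le> h" and h_less: "h < n"
    and sorted_sq_pos: "\<And>\<beta>. sorted_sq n x y h \<beta> > 0"
    and rows_span: "span {x j | j. j < n} = UNIV"
    and component: "U \<in> components (Uset n h x y)"
begin

abbreviation r :: "nat \<Rightarrow> real^'p \<Rightarrow> real" where "r i \<beta> \<equiv> resid x y i \<beta>"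

lemma Uset_iff: "\<gamma> \<in> Uset n h x y \<longleftrightarrow> (\<exists>H. separates n h (\<lambda>i. (r i \<gamma>)\<^sup>2) H)"
  using Uset_iff_separates[OF less_imp_le[OF h_less]] .

lemma open_U: "open U"
  using open_components[OF open_Uset component] h_less by simp

lemma U_subset: "U \<subseteq> Uset n h x y"
  using in_components_subset[OF component] .

lemma frontier_U: "frontier U = closure U - U"
  unfolding frontier_def using interior_open[OF open_U] by simp

lemma frontier_not_in_Uset:
  assumes "\<beta> \<in> frontier U"
  shows "\<beta> \<notin> Uset n h x y"
proof
  assume \<beta>: "\<beta> \<in> Uset n h x y"
  define C where "C = connected_component_set (Uset n h x y) \<beta>"
  have C: "C \<in> components (Uset n h x y)" unfolding C_def by (rule componentsI[OF \<beta>])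
  have "open C" using open_components[OF open_Uset C] h_less by simp
  moreover have "\<beta> \<in> C" "\<beta> \<in> closure U" "\<beta> \<notin> U"
    using \<beta> assms frontier_U by (auto simp: C_def)
  ultimately have "C \<inter> U \<noteq> {}" using open_Int_closure_eq_empty by blast
  then have "C = U" using components_nonoverlap[OF C component] by simp
  then show False using \<open>\<beta> \<in> C\<close> \<open>\<beta> \<notin> U\<close> by simp
qed

lemma frontier_tied:
  assumes "\<beta> \<in> frontier U"
  shows "tied n h (\<lambda>i. (r i \<beta>)\<^sup>2) (sorted_sq n x y h \<beta>)"
    and "sorted_sq n x y (Suc h) \<beta> = sorted_sq n x y h \<beta>"
proof -
  have "\<nexists>H. separates n h (\<lambda>i. (r i \<beta>)\<^sup>2) H"
    using frontier_not_in_Uset[OF assms] Uset_iff by blast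
  then show tie: "tied n h (\<lambda>i. (r i \<beta>)\<^sup>2) (sorted_sq n x y h \<beta>)"
    using not_separates_tied h_pos h_less by (simp add: sorted_sq_eq_order_stat)
  show "sorted_sq n x y (Suc h) \<beta> = sorted_sq n x y h \<beta>"
    using order_stat_tied(2)[OF tie h_pos h_less] by (simp add: sorted_sq_eq_order_stat)
qed

lemma tie_point:
  assumes part: "\<And>i. i < n \<Longrightarrow> i \<in> L \<or> i \<in> T \<or> i \<in> Up"
    and card_L: "card L < h" and card_LT: "h < card (L \<union> T)" and LT: "L \<union> T \<subseteq> {..<n}"
    and below: "\<And>i. i \<in> L \<Longrightarrow> (r i \<gamma>)\<^sup>2 \<le> v"
    and at: "\<And>i. i \<in> T \<Longrightarrow> (r i \<gamma>)\<^sup>2 = v"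
    and above: "\<And>i. i \<in> Up \<Longrightarrow> (r i \<gamma>)\<^sup>2 \<ge> v"
  shows "sorted_sq n x y h \<gamma> = v" "sorted_sq n x y (Suc h) \<gamma> = v" "\<gamma> \<notin> Uset n h x y"
proof -
  have "{i. i < n \<and> (r i \<gamma>)\<^sup>2 < v} \<subseteq> L"
    using part at above by (force simp: not_le[symmetric])
  then have "card {i. i < n \<and> (r i \<gamma>)\<^sup>2 < v} < h"
    using card_L LT card_mono[of L] by (meson finite_Un finite_lessThan finite_subset le_less_trans)
  moreover have "L \<union> T \<subseteq> {i. i < n \<and> (r i \<gamma>)\<^sup>2 \<le> v}"
    using LT below at by auto
  then have "h < card {i. i < n \<and> (r i \<gamma>)\<^sup>2 \<le> v}"
    using card_LT card_mono[of "{i. i < n \<and> (r i \<gamma>)\<^sup>2 \<le> v}" "L \<union> T"] by simp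
  ultimately have tie: "tied n h (\<lambda>i. (r i \<gamma>)\<^sup>2) v" by (simp add: tied_def)
  then show "sorted_sq n x y h \<gamma> = v" "sorted_sq n x y (Suc h) \<gamma> = v"
    using order_stat_tied[OF tie h_pos h_less] by (simp_all add: sorted_sq_eq_order_stat)
  show "\<gamma> \<notin> Uset n h x y"
    using tie separates_not_tied Uset_iff by blast
qed

definition tied_differences :: "real^'p \<Rightarrow> (real^'p) set" where
  "tied_differences \<gamma> = {sgn (r a \<gamma>) *\<^sub>R x a - sgn (r b \<gamma>) *\<^sub>R x b | a b.
     a < n \<and> b < n \<and> (r a \<gamma>)\<^sup>2 = sorted_sq n x y h \<gamma> \<and> (r b \<gamma>)\<^sup>2 = sorted_sq n x y h \<gamma>}"

definition tie_rank :: "real^'p \<Rightarrow> nat" where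
  "tie_rank \<gamma> = dim (tied_differences \<gamma>)"

end

locale lts_frontier_point = lts_component n h x y U for n h and x :: "nat \<Rightarrow> real^'p" and y U +
  fixes \<beta>
  assumes frontier: "\<beta> \<in> frontier U"
begin

definition "c = sorted_sq n x y h \<beta>"
definition "L = {i. i < n \<and> (r i \<beta>)\<^sup>2 < c}"
definition "T = {i. i < n \<and> (r i \<beta>)\<^sup>2 = c}"
definition "Up = {i. i < n \<and> (r i \<beta>)\<^sup>2 > c}"
definition "\<sigma> a = sgn (r a \<beta>)"
definition "z a = \<sigma> a *\<^sub>R x a"
definition "\<rho> = sqrt c"

lemma c_pos: "c > 0"
  unfolding c_def using sorted_sq_pos by simp

lemma \<rho>_pos: "\<rho> > 0" and \<rho>_sq: "\<rho>\<^sup>2 = c"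
  unfolding \<rho>_def using c_pos by simp_all

lemma partition: "i < n \<Longrightarrow> i \<in> L \<or> i \<in> T \<or> i \<in> Up"
  unfolding L_def T_def Up_def by auto

lemma L_Up_disjoint_T: "i \<in> L \<union> Up \<Longrightarrow> (r i \<beta>)\<^sup>2 \<noteq> c"
  unfolding L_def Up_def by auto

lemma LT_subset: "L \<union> T \<subseteq> {..<n}"
  unfolding L_def T_def by auto

lemma finite_L: "finite L" and finite_T: "finite T" and finite_Up: "finite Up"
  unfolding L_def T_def Up_def by simp_all

lemma card_L: "card L < h" and card_LT: "h < card (L \<union> T)"
proof -
  have "L \<union> T = {i. i < n \<and> (r i \<beta>)\<^sup>2 \<le> c}" unfolding L_def T_def by auto
  then show "card L < h" "h < card (L \<union> T)"
    using frontier_tied(1)[OF frontier] by (simp_all add: tied_def L_def c_def)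
qed

lemma T_nonempty: "T \<noteq> {}"
  using card_L card_LT by auto

lemma sign_T: assumes "a \<in> T" shows "\<sigma> a * r a \<beta> = \<rho>" and "\<sigma> a \<in> {1, -1}"
proof -
  have sq: "(r a \<beta>)\<^sup>2 = c" and nz: "r a \<beta> \<noteq> 0"
    using assms c_pos by (auto simp: T_def)
  have "\<bar>r a \<beta>\<bar> = \<rho>" unfolding \<rho>_def using sq by (metis real_sqrt_abs)
  then show "\<sigma> a * r a \<beta> = \<rho>" unfolding \<sigma>_def by (cases "r a \<beta> > 0") (auto simp: sgn_real_def)
  show "\<sigma> a \<in> {1, -1}" unfolding \<sigma>_def using nz by (simp add: sgn_real_def)
qed

lemma sign_T_sq: "a \<in> T \<Longrightarrow> \<sigma> a * \<sigma> a = 1"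
  using sign_T(2) by fastforce

lemma sq_sign_T: "a \<in> T \<Longrightarrow> (\<sigma> a * v)\<^sup>2 = v\<^sup>2"
  using sign_T_sq by (simp add: power2_eq_square algebra_simps)

lemma signed_resid_shift: "\<sigma> a * r a (u + s *\<^sub>R e) = \<sigma> a * r a u - s * (z a \<bullet> e)"
  unfolding resid_def z_def by (simp add: inner_add_right algebra_simps)

section \<open>Tie-preserving moves\<close>

text \<open>By the first clause, moving from \<open>\<beta>\<close> to \<open>\<beta> + s *\<^sub>R e\<close> shifts every signed tied residual
  \<open>\<sigma> a * r a\<close> by the same amount \<open>s * \<kappa>\<close>, so the observations in \<open>T\<close> stay tied.\<close>

definition tie_preserving :: "real^'p \<Rightarrow> real \<Rightarrow> bool" where
  "tie_preserving e \<kappa> \<longleftrightarrow> (\<forall>a\<in>T. z a \<bullet> e = \<kappa>) \<and>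
     (\<forall>s\<in>{0..<1}. \<forall>j\<in>L \<union> Up. (r j (\<beta> + s *\<^sub>R e))\<^sup>2 \<noteq> (\<rho> - s * \<kappa>)\<^sup>2)"

lemma tied_along:
  assumes "\<forall>a\<in>T. z a \<bullet> e = \<kappa>" "a \<in> T"
  shows "\<sigma> a * r a (\<beta> + s *\<^sub>R e) = \<rho> - s * \<kappa>" "(r a (\<beta> + s *\<^sub>R e))\<^sup>2 = (\<rho> - s * \<kappa>)\<^sup>2"
proof -
  show eq: "\<sigma> a * r a (\<beta> + s *\<^sub>R e) = \<rho> - s * \<kappa>"
    using signed_resid_shift[of a \<beta> s e] sign_T(1) assms by simp
  show "(r a (\<beta> + s *\<^sub>R e))\<^sup>2 = (\<rho> - s * \<kappa>)\<^sup>2"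
    using sq_sign_T[OF assms(2)] by (simp flip: eq)
qed

lemma untied_along:
  assumes "tie_preserving e \<kappa>" "s \<in> {0..1}"
  shows "j \<in> L \<Longrightarrow> (r j (\<beta> + s *\<^sub>R e))\<^sup>2 \<le> (\<rho> - s * \<kappa>)\<^sup>2"
    and "j \<in> Up \<Longrightarrow> (r j (\<beta> + s *\<^sub>R e))\<^sup>2 \<ge> (\<rho> - s * \<kappa>)\<^sup>2"
proof -
  let ?f = "\<lambda>t. (r j (\<beta> + t *\<^sub>R e))\<^sup>2 - (\<rho> - t * \<kappa>)\<^sup>2"
  have cont: "continuous_on {0..1} ?f" "continuous_on {0..1} (\<lambda>t. - ?f t)"
    unfolding resid_def by (intro continuous_intros)+
  have nz: "?f t \<noteq> 0" "- ?f t \<noteq> 0" if "j \<in> L \<union> Up" "t \<in> {0..<1}" for t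
  proof -
    have "(r j (\<beta> + t *\<^sub>R e))\<^sup>2 \<noteq> (\<rho> - t * \<kappa>)\<^sup>2"
      using assms(1) that unfolding tie_preserving_def by blast
    then show "?f t \<noteq> 0" "- ?f t \<noteq> 0" by simp_all
  qed
  show "(r j (\<beta> + s *\<^sub>R e))\<^sup>2 \<le> (\<rho> - s * \<kappa>)\<^sup>2" if "j \<in> L"
  proof -
    have "?f 0 < 0" using that by (simp add: L_def \<rho>_sq)
    then have "?f s \<le> 0" using continuous_sign_persists[OF cont(1) _ _ assms(2)] nz that by blast
    then show ?thesis by simp
  qed
  show "(r j (\<beta> + s *\<^sub>R e))\<^sup>2 \<ge> (\<rho> - s * \<kappa>)\<^sup>2" if "j \<in> Up"
  proof -
    have "- ?f 0 < 0" using that by (simp add: Up_def \<rho>_sq)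
    then have "- ?f s \<le> 0" using continuous_sign_persists[OF cont(2) _ _ assms(2)] nz that by blast
    then show ?thesis by simp
  qed
qed

lemma tie_along:
  assumes "tie_preserving e \<kappa>" "s \<in> {0..1}"
  shows "sorted_sq n x y h (\<beta> + s *\<^sub>R e) = (\<rho> - s * \<kappa>)\<^sup>2"
    and "\<beta> + s *\<^sub>R e \<notin> Uset n h x y"
    and "\<rho> - s * \<kappa> > 0"
proof -
  have ze: "\<forall>a\<in>T. z a \<bullet> e = \<kappa>" using assms(1) by (simp add: tie_preserving_def)
  have tie: "sorted_sq n x y h (\<beta> + t *\<^sub>R e) = (\<rho> - t * \<kappa>)\<^sup>2 \<and> \<beta> + t *\<^sub>R e \<notin> Uset n h x y"
    if "t \<in> {0..1}" for t
    using tie_point[OF partition card_L card_LT LT_subset, of "\<beta> + t *\<^sub>R e" "(\<rho> - t * \<kappa>)\<^sup>2"]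
      untied_along[OF assms(1) that] tied_along(2)[OF ze] by blast
  then show "sorted_sq n x y h (\<beta> + s *\<^sub>R e) = (\<rho> - s * \<kappa>)\<^sup>2" "\<beta> + s *\<^sub>R e \<notin> Uset n h x y"
    using assms(2) by auto
  have nz: "\<rho> - t * \<kappa> \<noteq> 0" if "t \<in> {0..1}" for t
    using tie[OF that] sorted_sq_pos[of "\<beta> + t *\<^sub>R e"] by auto
  have "\<forall>t\<in>{0..<1}. - (\<rho> - t * \<kappa>) \<noteq> 0"
  proof
    fix t :: real assume "t \<in> {0..<1}"
    then show "- (\<rho> - t * \<kappa>) \<noteq> 0" using nz[of t] by simp
  qed
  then have "- (\<rho> - s * \<kappa>) \<le> 0"
    using \<rho>_pos assms(2)
    by (intro continuous_sign_persists[where f = "\<lambda>t. - (\<rho> - t * \<kappa>)" and a = 0 and b = 1])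
      (auto intro!: continuous_intros)
  then show "\<rho> - s * \<kappa> > 0" using nz[OF assms(2)] by simp
qed

definition ordered_region :: "(real^'p) set" where
  "ordered_region = {\<gamma>. (\<forall>i\<in>L. \<forall>a\<in>T. (r i \<gamma>)\<^sup>2 < (r a \<gamma>)\<^sup>2) \<and>
     (\<forall>a\<in>T. \<forall>j\<in>Up. (r a \<gamma>)\<^sup>2 < (r j \<gamma>)\<^sup>2) \<and> (\<forall>a\<in>T. 0 < \<sigma> a * r a \<gamma>)}"

lemma open_ordered_region: "open ordered_region"
proof -
  have "ordered_region = {\<gamma>. \<forall>i\<in>L. \<forall>a\<in>T. (r i \<gamma>)\<^sup>2 < (r a \<gamma>)\<^sup>2}
      \<inter> {\<gamma>. \<forall>a\<in>T. \<forall>j\<in>Up. (r a \<gamma>)\<^sup>2 < (r j \<gamma>)\<^sup>2} \<inter> (\<Inter>a\<in>T. {\<gamma>. 0 < \<sigma> a * r a \<gamma>})"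
    unfolding ordered_region_def by auto
  also have "open \<dots>"
    using finite_L finite_T finite_Up
    by (intro open_Int open_resid_order open_INT ballI open_Collect_less)
      (auto simp: resid_def intro!: continuous_intros)
  finally show ?thesis .
qed

lemma along_in_ordered_region:
  assumes "tie_preserving e \<kappa>" "s \<in> {0..<1}"
  shows "\<beta> + s *\<^sub>R e \<in> ordered_region"
proof -
  have s: "s \<in> {0..1}" using assms(2) by simp
  have ze: "\<forall>a\<in>T. z a \<bullet> e = \<kappa>" using assms(1) by (simp add: tie_preserving_def)
  have ne: "(r j (\<beta> + s *\<^sub>R e))\<^sup>2 \<noteq> (\<rho> - s * \<kappa>)\<^sup>2" if "j \<in> L \<union> Up" for j
    using assms that by (simp add: tie_preserving_def)
  have "(r i (\<beta> + s *\<^sub>R e))\<^sup>2 < (\<rho> - s * \<kappa>)\<^sup>2" if "i \<in> L" for i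
    using untied_along(1)[OF assms(1) s that] ne[of i] that by simp
  moreover have "(r j (\<beta> + s *\<^sub>R e))\<^sup>2 > (\<rho> - s * \<kappa>)\<^sup>2" if "j \<in> Up" for j
    using untied_along(2)[OF assms(1) s that] ne[of j] that by simp
  ultimately show ?thesis
    unfolding ordered_region_def
    using tied_along[OF ze] tie_along(3)[OF assms(1) s] by simp
qed

lemma separating_set_lower:
  assumes u: "u \<in> ordered_region" and H: "separates n h (\<lambda>i. (r i u)\<^sup>2) H"
  shows "L \<subseteq> H"
proof -
  have H_sub: "H \<subseteq> {..<n}" and card_H: "card H = h"
    and less: "\<And>i j. i \<in> H \<Longrightarrow> j < n \<Longrightarrow> j \<notin> H \<Longrightarrow> (r i u)\<^sup>2 < (r j u)\<^sup>2"
    using H by (auto simp: separates_def)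
  have LT: "\<And>i a. i \<in> L \<Longrightarrow> a \<in> T \<Longrightarrow> (r i u)\<^sup>2 < (r a u)\<^sup>2"
    and TU: "\<And>a j. a \<in> T \<Longrightarrow> j \<in> Up \<Longrightarrow> (r a u)\<^sup>2 < (r j u)\<^sup>2"
    using u by (auto simp: ordered_region_def)
  obtain a0 where a0: "a0 \<in> T" using T_nonempty by blast
  show ?thesis
  proof
    fix i assume i: "i \<in> L"
    then have "i < n" by (simp add: L_def)
    show "i \<in> H"
    proof (rule ccontr)
      assume "i \<notin> H"
      have "k \<in> L" if k: "k \<in> H" for k
      proof -
        have k_less: "(r k u)\<^sup>2 < (r i u)\<^sup>2" using less[OF k \<open>i < n\<close> \<open>i \<notin> H\<close>] .
        have "k \<notin> T"
        proof
          assume "k \<in> T"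
          then show False using LT[OF i] k_less by fastforce
        qed
        moreover have "k \<notin> Up"
        proof
          assume "k \<in> Up"
          then show False using LT[OF i a0] TU[OF a0] k_less by fastforce
        qed
        ultimately show "k \<in> L" using partition[of k] k H_sub by blast
      qed
      then have "card H \<le> card L" by (intro card_mono[OF finite_L]) blast
      then show False using card_H card_L by simp
    qed
  qed
qed

lemma separating_set_upper:
  assumes u: "u \<in> ordered_region" and H: "separates n h (\<lambda>i. (r i u)\<^sup>2) H"
  shows "H \<subseteq> L \<union> T"
proof -
  have H_sub: "H \<subseteq> {..<n}" and card_H: "card H = h"
    and less: "\<And>i j. i \<in> H \<Longrightarrow> j < n \<Longrightarrow> j \<notin> H \<Longrightarrow> (r i u)\<^sup>2 < (r j u)\<^sup>2"
    using H by (auto simp: separates_def)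
  have LT: "\<And>i a. i \<in> L \<Longrightarrow> a \<in> T \<Longrightarrow> (r i u)\<^sup>2 < (r a u)\<^sup>2"
    and TU: "\<And>a j. a \<in> T \<Longrightarrow> j \<in> Up \<Longrightarrow> (r a u)\<^sup>2 < (r j u)\<^sup>2"
    using u by (auto simp: ordered_region_def)
  obtain a0 where a0: "a0 \<in> T" using T_nonempty by blast
  show ?thesis
  proof
    fix j assume j: "j \<in> H"
    show "j \<in> L \<union> T"
    proof (rule ccontr)
      assume "j \<notin> L \<union> T"
      then have jU: "j \<in> Up" using partition[of j] j H_sub by blast
      have "k \<in> H" if k: "k \<in> L \<union> T" for k
      proof (rule ccontr)
        assume "k \<notin> H"
        have "k < n" using k LT_subset by blast
        have "(r j u)\<^sup>2 < (r k u)\<^sup>2" using less[OF j \<open>k < n\<close> \<open>k \<notin> H\<close>] .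
        moreover have "(r k u)\<^sup>2 < (r j u)\<^sup>2"
        proof (cases "k \<in> L")
          case True
          then show ?thesis using LT[OF True a0] TU[OF a0 jU] by simp
        next
          case False
          then show ?thesis using k TU[OF _ jU] by blast
        qed
        ultimately show False by simp
      qed
      then have "insert j (L \<union> T) \<subseteq> H" using j by blast
      then have "card (insert j (L \<union> T)) \<le> h"
        using card_H H_sub by (metis card_mono finite_lessThan finite_subset)
      moreover have "card (insert j (L \<union> T)) = Suc (card (L \<union> T))"
        using \<open>j \<notin> L \<union> T\<close> finite_L finite_T by simp
      ultimately show False using card_LT by simp
    qed
  qed
qed

lemma tied_sq_less_iff:
  assumes "\<gamma> \<in> ordered_region" "a \<in> T" "b \<in> T"
  shows "(r a \<gamma>)\<^sup>2 < (r b \<gamma>)\<^sup>2 \<longleftrightarrow> \<sigma> a * r a \<gamma> < \<sigma> b * r b \<gamma>"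
proof -
  have pos: "0 < \<sigma> a * r a \<gamma>" "0 < \<sigma> b * r b \<gamma>"
    using assms by (auto simp: ordered_region_def)
  have "(r a \<gamma>)\<^sup>2 < (r b \<gamma>)\<^sup>2 \<longleftrightarrow> (\<sigma> a * r a \<gamma>)\<^sup>2 < (\<sigma> b * r b \<gamma>)\<^sup>2"
    using sq_sign_T assms(2,3) by simp
  also have "\<dots> \<longleftrightarrow> \<sigma> a * r a \<gamma> < \<sigma> b * r b \<gamma>"
    using power_mono_iff[of "\<sigma> b * r b \<gamma>" "\<sigma> a * r a \<gamma>" 2] pos by (simp add: not_le[symmetric])
  finally show ?thesis .
qed

text \<open>Inside \<open>ordered_region\<close> a separating set consists of \<open>L\<close> and the tied observations with the
  smallest signed residuals; a shift that changes all signed tied residuals equally keeps it.\<close>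

lemma separates_shift:
  assumes ze: "\<forall>a\<in>T. z a \<bullet> e = \<kappa>"
    and u: "u \<in> ordered_region" and ue: "u + e \<in> ordered_region"
    and H: "separates n h (\<lambda>i. (r i u)\<^sup>2) H"
  shows "separates n h (\<lambda>i. (r i (u + e))\<^sup>2) H"
  unfolding separates_def
proof (intro conjI ballI allI impI)
  show "H \<subseteq> {..<n}" "card H = h" using H by (simp_all add: separates_def)
  fix i j assume i: "i \<in> H" and j: "j < n" "j \<notin> H"
  have iLT: "i \<in> L \<or> i \<in> T" using separating_set_upper[OF u H] i by blast
  have jTU: "j \<in> T \<or> j \<in> Up" using separating_set_lower[OF u H] partition[OF j(1)] j(2) by blast
  have LT: "\<And>i a. i \<in> L \<Longrightarrow> a \<in> T \<Longrightarrow> (r i (u + e))\<^sup>2 < (r a (u + e))\<^sup>2"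
    and TU: "\<And>a j. a \<in> T \<Longrightarrow> j \<in> Up \<Longrightarrow> (r a (u + e))\<^sup>2 < (r j (u + e))\<^sup>2"
    using ue by (auto simp: ordered_region_def)
  obtain a0 where a0: "a0 \<in> T" using T_nonempty by blast
  show "(r i (u + e))\<^sup>2 < (r j (u + e))\<^sup>2"
  proof (cases "i \<in> T \<and> j \<in> T")
    case True
    have "(r i u)\<^sup>2 < (r j u)\<^sup>2" using H i j by (simp add: separates_def)
    then have "\<sigma> i * r i u < \<sigma> j * r j u" using tied_sq_less_iff[OF u] True by blast
    moreover have "\<sigma> a * r a (u + e) = \<sigma> a * r a u - \<kappa>" if "a \<in> T" for a
      using signed_resid_shift[of a u 1 e] ze that by simp
    ultimately show ?thesis using tied_sq_less_iff[OF ue] True by simp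
  next
    case False
    with iLT jTU consider "i \<in> L" "j \<in> T" | "i \<in> L" "j \<in> Up" | "i \<in> T" "j \<in> Up" by blast
    then show ?thesis
    proof cases
      case 2
      then show ?thesis using LT[OF _ a0] TU[OF a0] less_trans by blast
    qed (use LT TU in auto)
  qed
qed

text \<open>Every point of the segment before its endpoint is a limit of points of \<open>U\<close>: points \<open>u \<in> U\<close>
  close to \<open>\<beta>\<close> can be translated along \<open>e\<close> without leaving \<open>Uset\<close>, since the translate stays in
  \<open>ordered_region\<close> (a neighbourhood of the compact segment) where \<open>separates_shift\<close> applies.\<close>

lemma along_in_closure:
  assumes tp: "tie_preserving e \<kappa>" and s0: "s0 \<in> {0..<1}"
  shows "\<beta> + s0 *\<^sub>R e \<in> closure U"
proof -
  have ze: "\<forall>a\<in>T. z a \<bullet> e = \<kappa>" using tp by (simp add: tie_preserving_def)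
  define K where "K = (\<lambda>s. \<beta> + s *\<^sub>R e) ` {0..s0}"
  have "compact K" unfolding K_def
    by (rule compact_continuous_image) (auto intro!: continuous_intros)
  moreover have "K \<subseteq> ordered_region"
    unfolding K_def using along_in_ordered_region[OF tp] s0 by auto
  ultimately obtain \<epsilon> where \<epsilon>: "\<epsilon> > 0" "(\<Union>k\<in>K. ball k \<epsilon>) \<subseteq> ordered_region"
    using compact_subset_open_imp_ball_epsilon_subset open_ordered_region by blast
  have "\<beta> \<in> closure U" using frontier frontier_U by blast
  show ?thesis
    unfolding closure_approachable
  proof (intro allI impI)
    fix \<delta> :: real assume "\<delta> > 0"
    then obtain u where u: "u \<in> U" "dist u \<beta> < min \<delta> \<epsilon>"
      using \<open>\<beta> \<in> closure U\<close> \<epsilon>(1) unfolding closure_approachable by (metis min_less_iff_conj)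
    have u_shift: "u + s *\<^sub>R e \<in> ordered_region" if "s \<in> {0..s0}" for s
    proof -
      have "dist (\<beta> + s *\<^sub>R e) (u + s *\<^sub>R e) < \<epsilon>" using u(2) by (simp add: dist_commute)
      then show ?thesis using \<epsilon>(2) that unfolding K_def by fastforce
    qed
    have u0: "u \<in> ordered_region" using u_shift[of 0] s0 by simp
    obtain H where H: "separates n h (\<lambda>i. (r i u)\<^sup>2) H"
      using u(1) U_subset Uset_iff by blast
    define P where "P = (\<lambda>s. u + s *\<^sub>R e) ` {0..s0}"
    have "P \<subseteq> Uset n h x y"
    proof
      fix p assume "p \<in> P"
      then obtain s where s: "s \<in> {0..s0}" "p = u + s *\<^sub>R e" unfolding P_def by blast
      have "\<forall>a\<in>T. z a \<bullet> (s *\<^sub>R e) = s * \<kappa>" using ze by simp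
      then have "separates n h (\<lambda>i. (r i p)\<^sup>2) H"
        using separates_shift[OF _ u0 u_shift[OF s(1)] H] s(2) by blast
      then show "p \<in> Uset n h x y" using Uset_iff by blast
    qed
    moreover have "connected P" unfolding P_def
      by (rule connected_continuous_image) (auto intro!: continuous_intros)
    moreover have "u \<in> P" unfolding P_def using s0 by force
    ultimately have "P \<subseteq> U" using components_maximal[OF component] u(1) by blast
    moreover have "u + s0 *\<^sub>R e \<in> P" unfolding P_def using s0 by auto
    moreover have "dist (u + s0 *\<^sub>R e) (\<beta> + s0 *\<^sub>R e) < \<delta>" using u(2) by simp
    ultimately show "\<exists>v\<in>U. dist v (\<beta> + s0 *\<^sub>R e) < \<delta>" by blast
  qed
qed

lemma along_in_frontier:
  assumes "tie_preserving e \<kappa>" "s \<in> {0..1}"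
  shows "\<beta> + s *\<^sub>R e \<in> frontier U"
proof -
  have "closed ((\<lambda>t. \<beta> + t *\<^sub>R e) -` closure U)"
    by (rule closed_vimage) (auto intro!: continuous_intros)
  moreover have "{0..<1} \<subseteq> (\<lambda>t. \<beta> + t *\<^sub>R e) -` closure U"
    using along_in_closure[OF assms(1)] by auto
  ultimately have "closure {0..<1::real} \<subseteq> (\<lambda>t. \<beta> + t *\<^sub>R e) -` closure U"
    by (rule closure_minimal[rotated])
  then have "\<beta> + s *\<^sub>R e \<in> closure U" using assms(2) by auto
  moreover have "\<beta> + s *\<^sub>R e \<notin> U" using tie_along(2)[OF assms] U_subset by auto
  ultimately show ?thesis using frontier_U by simp
qed

section \<open>Raising the tie rank\<close>

lemma tied_differences_eq: "tied_differences \<beta> = {z a - z b | a b. a \<in> T \<and> b \<in> T}"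
  unfolding tied_differences_def z_def \<sigma>_def T_def c_def by blast

lemma tied_at_endpoint:
  assumes "tie_preserving e \<kappa>" "a \<in> T"
  shows "(r a (\<beta> + e))\<^sup>2 = sorted_sq n x y h (\<beta> + e)" and "sgn (r a (\<beta> + e)) = \<sigma> a"
proof -
  have ze: "\<forall>a\<in>T. z a \<bullet> e = \<kappa>" using assms(1) by (simp add: tie_preserving_def)
  show "(r a (\<beta> + e))\<^sup>2 = sorted_sq n x y h (\<beta> + e)"
    using tied_along(2)[OF ze assms(2), of 1] tie_along(1)[OF assms(1), of 1] by simp
  have "\<sigma> a * r a (\<beta> + e) > 0"
    using tied_along(1)[OF ze assms(2), of 1] tie_along(3)[OF assms(1), of 1] by simp
  then show "sgn (r a (\<beta> + e)) = \<sigma> a"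
    using sign_T(2)[OF assms(2)] by (auto simp: sgn_real_def zero_less_mult_iff)
qed

lemma tied_differences_subset_endpoint:
  assumes "tie_preserving e \<kappa>"
  shows "tied_differences \<beta> \<subseteq> tied_differences (\<beta> + e)"
  unfolding tied_differences_eq
proof safe
  fix a b assume "a \<in> T" "b \<in> T"
  then show "z a - z b \<in> tied_differences (\<beta> + e)"
    unfolding tied_differences_def z_def using tied_at_endpoint[OF assms]
    by (intro CollectI exI[of _ a] exI[of _ b]) (auto simp: T_def)
qed

text \<open>An observation \<open>j\<close> joining the tie at \<open>\<beta> + e\<close> contributes a tied difference that is not
  orthogonal to \<open>e\<close>: otherwise \<open>j\<close> would already have been tied at \<open>\<beta>\<close>.\<close>

lemma new_tied_difference:
  assumes tp: "tie_preserving e \<kappa>" and j: "j \<in> L \<union> Up"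
    and meets: "(r j (\<beta> + e))\<^sup>2 = (\<rho> - \<kappa>)\<^sup>2" and a0: "a0 \<in> T"
  shows "sgn (r j (\<beta> + e)) *\<^sub>R x j - z a0 \<in> tied_differences (\<beta> + e)"
    and "(sgn (r j (\<beta> + e)) *\<^sub>R x j - z a0) \<bullet> e \<noteq> 0"
proof -
  have "j < n" "a0 < n" using j a0 by (auto simp: L_def Up_def T_def)
  moreover have "sorted_sq n x y h (\<beta> + e) = (\<rho> - \<kappa>)\<^sup>2"
    using tie_along(1)[OF tp, of 1] by simp
  ultimately show "sgn (r j (\<beta> + e)) *\<^sub>R x j - z a0 \<in> tied_differences (\<beta> + e)"
    unfolding tied_differences_def z_def using meets tied_at_endpoint[OF tp a0]
    by (intro CollectI exI[of _ j] exI[of _ a0]) auto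
  show "(sgn (r j (\<beta> + e)) *\<^sub>R x j - z a0) \<bullet> e \<noteq> 0"
  proof
    assume "(sgn (r j (\<beta> + e)) *\<^sub>R x j - z a0) \<bullet> e = 0"
    then have "sgn (r j (\<beta> + e)) * (x j \<bullet> e) = \<kappa>"
      using tp a0 by (simp add: tie_preserving_def inner_diff_left)
    moreover have abs_j: "\<bar>r j (\<beta> + e)\<bar> = \<rho> - \<kappa>"
      using arg_cong[OF meets, of sqrt] tie_along(3)[OF tp, of 1] by simp
    then have "sgn (r j (\<beta> + e)) * r j (\<beta> + e) = \<rho> - \<kappa>"
      by (simp add: sgn_real_def abs_if split: if_splits)
    moreover have "r j \<beta> = r j (\<beta> + e) + x j \<bullet> e"
      by (simp add: resid_def inner_add_right)
    ultimately have "sgn (r j (\<beta> + e)) * r j \<beta> = \<rho>"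
      by (simp add: distrib_left)
    moreover have "r j (\<beta> + e) \<noteq> 0"
      using abs_j tie_along(3)[OF tp, of 1] by auto
    then have "(sgn (r j (\<beta> + e)))\<^sup>2 = 1"
      by (simp add: sgn_real_def)
    ultimately have "(r j \<beta>)\<^sup>2 = c"
      using \<rho>_sq power_mult_distrib[of "sgn (r j (\<beta> + e))" "r j \<beta>" 2] by simp
    then show False using L_Up_disjoint_T j by blast
  qed
qed

lemma tie_rank_increases:
  assumes tp: "tie_preserving e \<kappa>" and j: "j \<in> L \<union> Up"
    and meets: "(r j (\<beta> + e))\<^sup>2 = (\<rho> - \<kappa>)\<^sup>2"
    and orth: "\<forall>v\<in>tied_differences \<beta>. e \<bullet> v = 0"
  shows "tie_rank (\<beta> + e) > tie_rank \<beta>"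
proof -
  let ?D = "tied_differences \<beta>"
  obtain a0 where a0: "a0 \<in> T" using T_nonempty by blast
  define v where "v = sgn (r j (\<beta> + e)) *\<^sub>R x j - z a0"
  have "insert v ?D \<subseteq> tied_differences (\<beta> + e)"
    using new_tied_difference(1)[OF tp j meets a0] tied_differences_subset_endpoint[OF tp]
    by (simp add: v_def)
  moreover have "v \<notin> span ?D"
  proof
    assume "v \<in> span ?D"
    then have "orthogonal e v"
      by (rule orthogonal_to_span) (use orth in \<open>auto simp: orthogonal_def\<close>)
    then show False
      using new_tied_difference(2)[OF tp j meets a0] by (simp add: v_def orthogonal_def inner_commute)
  qed
  then have "dim (insert v ?D) = dim ?D + 1" by (simp add: dim_insert)
  ultimately show ?thesis
    unfolding tie_rank_def using dim_subset[of "insert v ?D"] by fastforce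
qed

text \<open>A tie that persists along a whole line forces every row to be orthogonal to its direction:
  otherwise some untied residual could be driven across the tied level.\<close>

lemma tie_preserving_line_orthogonal:
  assumes tp: "\<And>t. tie_preserving (t *\<^sub>R d) (t * \<kappa>)" and "j < n"
  shows "x j \<bullet> d = 0"
proof (rule ccontr)
  assume nz: "x j \<bullet> d \<noteq> 0"
  have one: "(1::real) \<in> {0..1}" by simp
  have "\<kappa> = 0"
  proof (rule ccontr)
    assume "\<kappa> \<noteq> 0"
    then show False using tie_along(3)[OF tp one, of "\<rho> / \<kappa>"] by simp
  qed
  have resid_line: "r j (\<beta> + t *\<^sub>R d) = r j \<beta> - t * (x j \<bullet> d)" for t
    by (simp add: resid_def inner_add_right)
  consider "j \<in> L" | "j \<in> T" | "j \<in> Up" using partition \<open>j < n\<close> by blast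
  then show False
  proof cases
    case 1
    \<comment> \<open>drive the residual up to \<open>\<rho> + 1\<close>\<close>
    define t where "t = (r j \<beta> - \<rho> - 1) / (x j \<bullet> d)"
    have "(r j (\<beta> + t *\<^sub>R d))\<^sup>2 \<le> \<rho>\<^sup>2"
      using untied_along(1)[OF tp one 1] \<open>\<kappa> = 0\<close> by simp
    moreover have "r j (\<beta> + t *\<^sub>R d) = \<rho> + 1"
      using nz by (simp add: resid_line t_def)
    ultimately show False using \<rho>_pos by (simp add: power2_eq_square algebra_simps)
  next
    case 2
    then have "\<sigma> j * (x j \<bullet> d) = 0"
      using tp[of 1] \<open>\<kappa> = 0\<close> by (simp add: tie_preserving_def z_def)
    then show False using nz sign_T(2)[OF 2] by auto
  next
    case 3
    \<comment> \<open>drive the residual down to \<open>0\<close>\<close>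
    define t where "t = r j \<beta> / (x j \<bullet> d)"
    have "(r j (\<beta> + t *\<^sub>R d))\<^sup>2 \<ge> \<rho>\<^sup>2"
      using untied_along(2)[OF tp one 3] \<open>\<kappa> = 0\<close> by simp
    moreover have "r j (\<beta> + t *\<^sub>R d) = 0"
      using nz by (simp add: resid_line t_def)
    ultimately show False using \<rho>_pos by simp
  qed
qed

lemma line_meets_tie:
  assumes "d \<noteq> 0" and zd: "\<forall>a\<in>T. z a \<bullet> d = \<kappa>"
  shows "\<exists>t. \<exists>j\<in>L \<union> Up. (r j (\<beta> + t *\<^sub>R d))\<^sup>2 = (\<rho> - t * \<kappa>)\<^sup>2"
proof (rule ccontr)
  assume no_meet: "\<not> ?thesis"
  have tp: "tie_preserving (t *\<^sub>R d) (t * \<kappa>)" for t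
    unfolding tie_preserving_def
  proof (intro conjI ballI notI)
    show "z a \<bullet> (t *\<^sub>R d) = t * \<kappa>" if "a \<in> T" for a using zd that by simp
    fix s j assume j: "j \<in> L \<union> Up" and "(r j (\<beta> + s *\<^sub>R t *\<^sub>R d))\<^sup>2 = (\<rho> - s * (t * \<kappa>))\<^sup>2"
    then have "(r j (\<beta> + (s * t) *\<^sub>R d))\<^sup>2 = (\<rho> - (s * t) * \<kappa>)\<^sup>2" by (simp add: mult.assoc)
    with no_meet j show False by blast
  qed
  have "orthogonal d v" if "v \<in> span {x j | j. j < n}" for v
    by (rule orthogonal_to_span[OF that])
      (use tie_preserving_line_orthogonal[OF tp] in \<open>auto simp: orthogonal_def inner_commute\<close>)
  then have "orthogonal d d" using rows_span by blast
  then show False using \<open>d \<noteq> 0\<close> by (simp add: orthogonal_def)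
qed

text \<open>Stopping at the meeting time closest to \<open>0\<close> gives a tie-preserving move.\<close>

lemma first_meeting:
  assumes zd: "\<forall>a\<in>T. z a \<bullet> d = \<kappa>"
    and meet: "\<exists>t. \<exists>j\<in>L \<union> Up. (r j (\<beta> + t *\<^sub>R d))\<^sup>2 = (\<rho> - t * \<kappa>)\<^sup>2"
  obtains t j where "tie_preserving (t *\<^sub>R d) (t * \<kappa>)"
    and "j \<in> L \<union> Up" "(r j (\<beta> + t *\<^sub>R d))\<^sup>2 = (\<rho> - t * \<kappa>)\<^sup>2"
proof -
  define Z where "Z = {t. \<exists>j\<in>L \<union> Up. (r j (\<beta> + t *\<^sub>R d))\<^sup>2 = (\<rho> - t * \<kappa>)\<^sup>2}"
  have "Z \<noteq> {}" using meet by (simp add: Z_def)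
  moreover have "closed Z"
  proof -
    have "Z = (\<Union>j\<in>L \<union> Up. {t. (r j (\<beta> + t *\<^sub>R d))\<^sup>2 = (\<rho> - t * \<kappa>)\<^sup>2})"
      by (auto simp: Z_def)
    also have "closed \<dots>"
      using finite_L finite_Up
      by (intro closed_UN ballI closed_Collect_eq) (auto simp: resid_def intro!: continuous_intros)
    finally show ?thesis .
  qed
  ultimately obtain t where t: "t \<in> Z" and t_min: "\<And>t'. t' \<in> Z \<Longrightarrow> dist 0 t \<le> dist 0 t'"
    using distance_attains_inf[of Z 0] by blast
  have "t \<noteq> 0"
    using t \<rho>_sq L_Up_disjoint_T by (auto simp: Z_def)
  have "tie_preserving (t *\<^sub>R d) (t * \<kappa>)"
    unfolding tie_preserving_def
  proof (intro conjI ballI notI)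
    show "z a \<bullet> (t *\<^sub>R d) = t * \<kappa>" if "a \<in> T" for a using zd that by simp
    fix s j assume s: "s \<in> {0..<1}" and j: "j \<in> L \<union> Up"
      and "(r j (\<beta> + s *\<^sub>R t *\<^sub>R d))\<^sup>2 = (\<rho> - s * (t * \<kappa>))\<^sup>2"
    then have "s * t \<in> Z" by (auto simp: Z_def mult.assoc)
    then have "\<bar>t\<bar> \<le> \<bar>s * t\<bar>" using t_min by (simp add: dist_real_def)
    moreover have "\<bar>s * t\<bar> < \<bar>t\<bar>" using s \<open>t \<noteq> 0\<close> by (simp add: abs_mult)
    ultimately show False by simp
  qed
  then show ?thesis using t that by (auto simp: Z_def)
qed

lemma frontier_rank_improvable:
  assumes "tie_rank \<beta> < CARD('p)"
  obtains \<gamma> where "\<gamma> \<in> frontier U" "tie_rank \<gamma> > tie_rank \<beta>"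
proof -
  let ?D = "tied_differences \<beta>"
  obtain d where "d \<noteq> 0" and d_orth: "\<And>v. v \<in> span ?D \<Longrightarrow> orthogonal d v"
    using orthogonal_to_subspace_exists[of ?D] assms unfolding tie_rank_def by auto
  have dD: "\<forall>v\<in>?D. d \<bullet> v = 0" using d_orth span_base unfolding orthogonal_def by blast
  obtain a0 where a0: "a0 \<in> T" using T_nonempty by blast
  define \<kappa> where "\<kappa> = z a0 \<bullet> d"
  have zd: "\<forall>a\<in>T. z a \<bullet> d = \<kappa>"
  proof
    fix a assume "a \<in> T"
    then have "d \<bullet> (z a - z a0) = 0" using dD a0 unfolding tied_differences_eq by blast
    then show "z a \<bullet> d = \<kappa>" by (simp add: \<kappa>_def inner_diff_right inner_commute)
  qed
  obtain t j where tp: "tie_preserving (t *\<^sub>R d) (t * \<kappa>)"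
    and "j \<in> L \<union> Up" "(r j (\<beta> + t *\<^sub>R d))\<^sup>2 = (\<rho> - t * \<kappa>)\<^sup>2"
    using first_meeting[OF zd line_meets_tie[OF \<open>d \<noteq> 0\<close> zd]] by blast
  then have "tie_rank (\<beta> + t *\<^sub>R d) > tie_rank \<beta>"
    using tie_rank_increases[OF tp] dD by simp
  moreover have "\<beta> + t *\<^sub>R d \<in> frontier U" using along_in_frontier[OF tp, of 1] by simp
  ultimately show ?thesis using that by blast
qed

lemma resid_T: "a \<in> T \<Longrightarrow> r a \<beta> = \<sigma> a * \<rho>"
  using sign_T(1)[of a] sign_T_sq[of a] by (metis mult.assoc mult_1)

text \<open>At full rank, a chain of tied observations with spanning consecutive differences
  \<open>z a - z b = \<sigma> a *\<^sub>R (x a + s *\<^sub>R x b)\<close>, \<open>s = - \<sigma> a * \<sigma> b\<close>, yields the \<open>p\<close> equations.\<close>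

lemma equations_of_full_rank:
  assumes "tie_rank \<beta> = CARD('p)"
  obtains idx s where "\<And>k. k \<le> CARD('p) \<Longrightarrow> idx k \<in> T" and "inj_on idx {0..CARD('p)}"
    and "\<And>k. k < CARD('p) \<Longrightarrow> s k \<in> {1, -1}"
    and "\<And>c k. (\<Sum>k<CARD('p). c k *\<^sub>R (x (idx k) + s k *\<^sub>R x (idx (Suc k)))) = 0 \<Longrightarrow>
      k < CARD('p) \<Longrightarrow> c k = 0"
    and "\<And>\<gamma>. (\<forall>k<CARD('p). (x (idx k) + s k *\<^sub>R x (idx (Suc k))) \<bullet> \<gamma> =
      y (idx k) + s k * y (idx (Suc k))) \<longleftrightarrow> \<gamma> = \<beta>"
proof -
  let ?p = "CARD('p)"
  have "span {z a - z b | a b. a \<in> T \<and> b \<in> T} = UNIV"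
    using assms dim_eq_full[of "{z a - z b | a b. a \<in> T \<and> b \<in> T}"]
    by (simp add: tie_rank_def tied_differences_eq)
  then obtain idx where idx: "\<And>k. k \<le> ?p \<Longrightarrow> idx k \<in> T"
    and span_d: "span ((\<lambda>k. z (idx k) - z (idx (Suc k))) ` {..<?p}) = UNIV"
    using chain_with_spanning_differences[of z T] T_nonempty by auto
  define s where "s k = - \<sigma> (idx k) * \<sigma> (idx (Suc k))" for k
  define w where "w k = x (idx k) + s k *\<^sub>R x (idx (Suc k))" for k
  have d_w: "z (idx k) - z (idx (Suc k)) = \<sigma> (idx k) *\<^sub>R w k" if "k < ?p" for k
    using sign_T_sq[OF idx[of k]] that
    by (simp add: w_def s_def z_def scaleR_add_right algebra_simps)
  have span_w: "span (w ` {..<?p}) = UNIV"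
  proof -
    have "(\<lambda>k. z (idx k) - z (idx (Suc k))) ` {..<?p} \<subseteq> span (w ` {..<?p})"
      using d_w by (auto intro: span_scale span_base)
    then show ?thesis using span_d span_mono[of _ "span (w ` {..<?p})"] by (metis span_span top.extremum_unique)
  qed
  show ?thesis
  proof (rule that[of idx s])
    show "idx k \<in> T" if "k \<le> ?p" for k using idx that .
    show "inj_on idx {0..?p}"
      using independent_if_span_UNIV[of "\<lambda>k. z (idx k) - z (idx (Suc k))"] span_d
      by (intro inj_on_if_consecutive_differences_independent) simp
    show "s k \<in> {1, -1}" if "k < ?p" for k
      using sign_T(2)[OF idx[of k]] sign_T(2)[OF idx[of "Suc k"]] that by (auto simp: s_def)
    show "c k = 0" if "(\<Sum>k<?p. c k *\<^sub>R (x (idx k) + s k *\<^sub>R x (idx (Suc k)))) = 0" "k < ?p" for c k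
      using independent_if_span_UNIV[of w c k] span_w that by (simp add: w_def)
    have rhs: "w k \<bullet> \<beta> = y (idx k) + s k * y (idx (Suc k))" if "k < ?p" for k
      using resid_T[OF idx[of k]] resid_T[OF idx[of "Suc k"]] sign_T_sq[OF idx[of "Suc k"]] that
      by (simp add: w_def s_def resid_def inner_add_left algebra_simps)
    show "(\<forall>k<?p. (x (idx k) + s k *\<^sub>R x (idx (Suc k))) \<bullet> \<gamma> = y (idx k) + s k * y (idx (Suc k)))
        \<longleftrightarrow> \<gamma> = \<beta>" for \<gamma>
      using inner_eq_iff_if_span_UNIV[OF span_w, of \<gamma> \<beta>] rhs by (simp add: w_def)
  qed
qed

end

lemma (in lts_component) full_rank_frontier_point:
  assumes "frontier U \<noteq> {}"
  obtains \<beta> where "\<beta> \<in> frontier U" "tie_rank \<beta> = CARD('p)"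
proof -
  have le: "tie_rank \<gamma> \<le> CARD('p)" for \<gamma>
    unfolding tie_rank_def by (rule dim_subset_UNIV_cart)
  let ?R = "tie_rank ` frontier U"
  have "?R \<subseteq> {..CARD('p)}" using le by auto
  then have "finite ?R" by (rule finite_subset) simp
  moreover have "?R \<noteq> {}" using assms by simp
  ultimately have "Max ?R \<in> ?R" by (rule Max_in)
  then obtain \<beta> where \<beta>: "\<beta> \<in> frontier U" "tie_rank \<beta> = Max ?R" by auto
  interpret lts_frontier_point n h x y U \<beta>
    using lts_component_axioms \<beta>(1) by (simp add: lts_frontier_point_def lts_frontier_point_axioms_def)
  have "\<not> tie_rank \<beta> < CARD('p)"
  proof
    assume "tie_rank \<beta> < CARD('p)"
    then obtain \<gamma> where "\<gamma> \<in> frontier U" "tie_rank \<gamma> > tie_rank \<beta>"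
      by (rule frontier_rank_improvable)
    moreover have "tie_rank \<gamma> \<le> Max ?R" using \<open>finite ?R\<close> \<open>\<gamma> \<in> frontier U\<close> by simp
    ultimately show False using \<beta>(2) by simp
  qed
  then show ?thesis using that[OF \<beta>(1)] le[of \<beta>] by simp
qed

lemma span_UNIV_if_pair_sums:
  fixes x :: "nat \<Rightarrow> 'a::euclidean_space"
  assumes "dim {x k + x (k+1) | k. k < n - 1} = DIM('a)"
  shows "span {x j | j. j < n} = UNIV"
proof -
  have sums: "{x k + x (k+1) | k. k < n - 1} \<subseteq> span {x j | j. j < n}"
  proof safe
    fix k assume "k < n - 1"
    then have "x k \<in> span {x j | j. j < n}" "x (k+1) \<in> span {x j | j. j < n}"
      by (auto intro!: span_base)
    then show "x k + x (k+1) \<in> span {x j | j. j < n}" by (rule span_add)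
  qed
  have "DIM('a) \<le> dim (span {x j | j. j < n})"
    using dim_subset[OF sums] assms by simp
  then have "dim {x j | j. j < n} = DIM('a)"
    using dim_subset_UNIV[of "{x j | j. j < n}"] by (simp add: dim_span)
  then show ?thesis by (simp add: dim_eq_full)
qed

text \<open>Only the all-plus instance of (A3) is used, to know that the rows span \<open>\<real>\<^sup>p\<close>.\<close>

theorem mainTheorem3:
  fixes n h :: nat and x :: "nat \<Rightarrow> real^'p" and y :: "nat \<Rightarrow> real"
  assumes np: "n > CARD('p)"
    and hp: "CARD('p) \<le> h" and hn: "h < n"
    and A1: "\<forall>i<n. x i \<noteq> 0 \<and> (\<forall>j<n. i \<noteq> j \<longrightarrow> x i \<noteq> x j \<and> x i \<noteq> - x j)"
    and A2: "\<forall>\<beta>. sorted_sq n x y h \<beta> > 0"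
    and A3: "\<forall>s :: nat \<Rightarrow> real. (\<forall>k<n-1. s k \<in> {1, -1}) \<longrightarrow>
               dim {x k + s k *\<^sub>R x (k+1) | k. k < n - 1} = CARD('p)"
    and U: "U \<in> components (Uset n h x y)"
    and bd: "frontier U \<noteq> {}"
  shows "\<exists>\<beta> idx s. \<beta> \<in> frontier U
     \<and> (\<forall>k\<le>CARD('p). idx k < n) \<and> inj_on idx {0..CARD('p)}
     \<and> (\<forall>k<CARD('p). s k \<in> {1, -1 :: real})
     \<and> (\<forall>c :: nat \<Rightarrow> real. (\<Sum>k<CARD('p). c k *\<^sub>R (x (idx k) + s k *\<^sub>R x (idx (k+1)))) = 0
            \<longrightarrow> (\<forall>k<CARD('p). c k = 0))
     \<and> (\<forall>\<gamma>. (\<forall>k<CARD('p). (x (idx k) + s k *\<^sub>R x (idx (k+1))) \<bullet> \<gamma> = y (idx k) + s k * y (idx (k+1)))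
            \<longleftrightarrow> \<gamma> = \<beta>)
     \<and> (resid x y (idx 0) \<beta>)\<^sup>2 = sorted_sq n x y h \<beta>
     \<and> sorted_sq n x y h \<beta> = sorted_sq n x y (h+1) \<beta>"
proof -
  have "span {x j | j. j < n} = UNIV"
    using A3[rule_format, of "\<lambda>_. 1"] by (intro span_UNIV_if_pair_sums) simp
  moreover have "1 \<le> h" using hp zero_less_card_finite[where 'a = 'p] by linarith
  ultimately interpret lts_component n h x y U
    using hn A2 U by unfold_locales auto
  obtain \<beta> where \<beta>: "\<beta> \<in> frontier U" "tie_rank \<beta> = CARD('p)"
    using full_rank_frontier_point[OF bd] .
  interpret lts_frontier_point n h x y U \<beta>
    using \<beta>(1) by unfold_locales
  obtain idx s where idx: "\<And>k. k \<le> CARD('p) \<Longrightarrow> idx k \<in> T" and inj: "inj_on idx {0..CARD('p)}"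
    and signs: "\<And>k. k < CARD('p) \<Longrightarrow> s k \<in> {1, -1}"
    and indep: "\<And>c k. (\<Sum>k<CARD('p). c k *\<^sub>R (x (idx k) + s k *\<^sub>R x (idx (Suc k)))) = 0 \<Longrightarrow>
      k < CARD('p) \<Longrightarrow> c k = 0"
    and unique: "\<And>\<gamma>. (\<forall>k<CARD('p). (x (idx k) + s k *\<^sub>R x (idx (Suc k))) \<bullet> \<gamma> =
      y (idx k) + s k * y (idx (Suc k))) \<longleftrightarrow> \<gamma> = \<beta>"
    using equations_of_full_rank[OF \<beta>(2)] by blast
  show ?thesis
  proof (intro exI conjI allI impI)
    show "\<beta> \<in> frontier U" "inj_on idx {0..CARD('p)}" by (fact \<beta>(1), fact inj)
    show "idx k < n" if "k \<le> CARD('p)" for k using idx[OF that] by (simp add: T_def)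
    show "s k \<in> {1, -1}" if "k < CARD('p)" for k using signs[OF that] .
    show "c k = 0" if "(\<Sum>k<CARD('p). c k *\<^sub>R (x (idx k) + s k *\<^sub>R x (idx (k+1)))) = 0" "k < CARD('p)"
      for c k using indep that by simp
    show "(\<forall>k<CARD('p). (x (idx k) + s k *\<^sub>R x (idx (k+1))) \<bullet> \<gamma> = y (idx k) + s k * y (idx (k+1)))
        \<longleftrightarrow> \<gamma> = \<beta>" for \<gamma> using unique by simp
    show "(resid x y (idx 0) \<beta>)\<^sup>2 = sorted_sq n x y h \<beta>" using idx[of 0] by (simp add: T_def c_def)
    show "sorted_sq n x y h \<beta> = sorted_sq n x y (h+1) \<beta>" using frontier_tied(2)[OF \<beta>(1)] by simp
  qed
qed

end
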